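(* In the setting of the context, regard the error exponent $K=K(a)$ as a function of $a\in[0,1]$ with $\Pi_0,\sigma^2$ fixed. If $\Gamma=\Pi_0/\sigma^2<1$, then there exists $a_m\in(0,1)$ at which $K$ attains its maximum over $[0,1]$, and $a_m$ is a solution of the equation $$[1+a^2+\Gamma(1-a^2)]^2-2\Big(r_e+\frac{a^4}{r_e}\Big)=0,\qquad r_e=R_e/\sigma^2,$$ where $R_e=P+\sigma^2$ with $P=\frac{\sqrt{[\sigma^2(1-a^2)-Q]^2+4\sigma^2Q}-\sigma^2(1-a^2)+Q}{2}$ and $Q=\Pi_0(1-a^2)$. Moreover, $a_m\to1$ as $\Gamma\to0$. Consequently, for the sampled diffusion with $a=e^{-A\Delta}$ ($A>0$), the optimal sensor spacing is $\Delta^*=-\log(a_m)/A$.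
   Context: Model: fix $a\in[0,1]$, $\Pi_0>0$, $\sigma^2>0$. The signal is a stationary Gaussian first-order autoregressive sequence $s_{i+1}=a s_i+u_i$, $i\ge1$, with $s_1\sim\mathcal N(0,\Pi_0)$ and $u_i$ i.i.d. $\mathcal N(0,Q)$, $Q=\Pi_0(1-a^2)$, independent of $s_1$. Observations follow $H_0: y_i=w_i$ or $H_1: y_i=s_i+w_i$, $w_i$ i.i.d. $\mathcal N(0,\sigma^2)$ independent of the signal; $\Gamma=\Pi_0/\sigma^2$ is the SNR. In the sensor application the samples come from a stationary diffusion $ds/dx=-As(x)+Bu(x)$ sampled at spacing $\Delta$, giving $a=e^{-A\Delta}$. The error exponent $K$ is $-\lim_{n\to\infty}\frac1n\log P_M(n)$, where $P_M(n)$ is the miss probability of the level-$\alpha$ Neyman–Pearson detector based on $y_1,\dots,y_n$ (independent of $\alpha\in(0,1)$); explicitly $K=\frac{1}{2\pi}\int_0^{2\pi} D(\mathcal N(0,\sigma^2)\|\mathcal N(0,S_y(\omega)))\,d\omega$ with $S_y(\omega)=\sigma^2+\frac{\Pi_0(1-a^2)}{1-2a\cos\omega+a^2}$, $D$ the Kullback–Leibler divergence. *)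

theory Defs
  imports "HOL-Analysis.Analysis"
begin

text \<open>Kullback--Leibler divergence D(N(0,v1) || N(0,v2)) between centred Gaussians.\<close>
definition gauss_KL :: "real \<Rightarrow> real \<Rightarrow> real" where
  "gauss_KL v1 v2 = (ln (v2 / v1) + v1 / v2 - 1) / 2"

text \<open>Power spectral density of y under H1; s2 is the noise variance sigma^2.\<close>
definition spec_y :: "real \<Rightarrow> real \<Rightarrow> real \<Rightarrow> real \<Rightarrow> real" where
  "spec_y Pi0 s2 a \<omega> = s2 + Pi0 * (1 - a\<^sup>2) / (1 - 2 * a * cos \<omega> + a\<^sup>2)"

definition err_exp :: "real \<Rightarrow> real \<Rightarrow> real \<Rightarrow> real" where
  "err_exp Pi0 s2 a =
     integral {0..2*pi} (\<lambda>\<omega>. gauss_KL s2 (spec_y Pi0 s2 a \<omega>)) / (2 * pi)"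

definition Q_of :: "real \<Rightarrow> real \<Rightarrow> real" where
  "Q_of Pi0 a = Pi0 * (1 - a\<^sup>2)"

definition P_of :: "real \<Rightarrow> real \<Rightarrow> real \<Rightarrow> real" where
  "P_of Pi0 s2 a =
     (sqrt ((s2 * (1 - a\<^sup>2) - Q_of Pi0 a)\<^sup>2 + 4 * s2 * Q_of Pi0 a)
        - s2 * (1 - a\<^sup>2) + Q_of Pi0 a) / 2"

definition Re_of :: "real \<Rightarrow> real \<Rightarrow> real \<Rightarrow> real" where
  "Re_of Pi0 s2 a = P_of Pi0 s2 a + s2"

definition opt_eq_lhs :: "real \<Rightarrow> real \<Rightarrow> real \<Rightarrow> real" where
  "opt_eq_lhs Pi0 s2 a =
     (let \<Gamma> = Pi0 / s2; r = Re_of Pi0 s2 a / s2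
      in (1 + a\<^sup>2 + \<Gamma> * (1 - a\<^sup>2))\<^sup>2 - 2 * (r + a ^ 4 / r))"

end

theory Submission
  imports Defs "HOL-Complex_Analysis.Complex_Analysis"
begin

text \<open>With G = Pi0/s2 and r = R_e/s2, spectral factorisation gives
  S_y(w)/s2 = r |1 - b e^(iw)|^2 / |1 - a e^(iw)|^2 with b = a/r, so the mean value property of
  ln |1 - b z|^2 and of (1 + b z)/(1 - b z) on the unit disc yields the closed form
  2 K = ln r - G (r - 1) / (1 + G - (1 - G) r).  By ln x <= x - 1 this is maximal in r exactly
  at the critical point 1 + G - (1 - G) r = sqrt 2 G sqrt r, which lies in (1, 1 + G) when G < 1.
  The map a |-> r is inverted by a^2 = r (1 + G - r) / (1 - (1 - G) r), so the critical r is
  attained at a unique a_m in (0, 1); the paper's stationarity equation is the critical-point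
  equation in disguise, and 1 - a_m^2 <= G / (sqrt 2 - 1) gives a_m -> 1.\<close>

lemma Re_holomorphic_mean_value_circle:
  fixes g :: "complex \<Rightarrow> complex"
  assumes "g holomorphic_on cball 0 1"
  shows "((\<lambda>t. Re (g (cis t))) has_integral (2 * pi * Re (g 0))) {0..2*pi}"
proof -
  have "((\<lambda>z. g z / (z - 0)) has_contour_integral (2 * pi * \<i> * g 0)) (circlepath 0 1)"
    using Cauchy_integral_circlepath_simple[OF assms, of 0] by simp
  then have "((\<lambda>t. \<i> * g (cis t)) has_integral (2 * pi * \<i> * g 0)) {0..2*pi}"
    unfolding circlepath_def
    by (subst (asm) has_contour_integral_part_circlepath_iff) (auto simp: field_simps)
  from has_integral_mult_right[OF this, of "- \<i>"]
  have "((\<lambda>t. g (cis t)) has_integral (2 * pi * g 0)) {0..2*pi}"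
    by (simp add: algebra_simps)
  from has_integral_linear[OF this bounded_linear_Re] show ?thesis
    by (simp add: o_def)
qed

lemma cmod_one_minus_cis_squared:
  "(cmod (1 - of_real b * cis t))\<^sup>2 = 1 + b\<^sup>2 - 2 * b * cos t"
proof -
  have "(cmod (1 - of_real b * cis t))\<^sup>2 = (1 - b * cos t)\<^sup>2 + (b * sin t)\<^sup>2"
    by (simp add: cmod_power2)
  also have "\<dots> = 1 + b\<^sup>2 * ((sin t)\<^sup>2 + (cos t)\<^sup>2) - 2 * b * cos t"
    by algebra
  finally show ?thesis by simp
qed

lemma Re_one_minus_mult_pos:
  assumes "\<bar>b\<bar> < 1" "z \<in> cball (0::complex) 1"
  shows "Re (1 - of_real b * z) > 0"
proof -
  have "\<bar>Re z\<bar> \<le> 1" using assms(2) abs_Re_le_cmod[of z] by simp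
  then have "\<bar>b * Re z\<bar> \<le> \<bar>b\<bar>" by (simp add: abs_mult mult_left_le)
  then show ?thesis using assms(1) abs_ge_self[of "b * Re z"] by simp
qed

lemma poisson_denom_pos:
  fixes b t :: real
  assumes "\<bar>b\<bar> < 1"
  shows "1 + b\<^sup>2 - 2 * b * cos t > 0"
proof -
  have "\<bar>b * cos t\<bar> \<le> \<bar>b\<bar>" by (simp add: abs_mult mult_left_le)
  then have "b * cos t \<le> \<bar>b\<bar>" using abs_ge_self[of "b * cos t"] by linarith
  moreover have "(1 - \<bar>b\<bar>)\<^sup>2 > 0" using assms by simp
  ultimately show ?thesis by (simp add: power2_eq_square algebra_simps)
qed

lemma has_integral_inverse_poisson_denom:
  fixes b :: real
  assumes "\<bar>b\<bar> < 1"
  shows "((\<lambda>t. 1 / (1 + b\<^sup>2 - 2 * b * cos t)) has_integral (2 * pi / (1 - b\<^sup>2))) {0..2*pi}"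
proof -
  let ?g = "\<lambda>z::complex. (1 + of_real b * z) / (1 - of_real b * z)"
  have "1 - of_real b * z \<noteq> 0" if "z \<in> cball 0 1" for z :: complex
    using Re_one_minus_mult_pos[OF assms that] by (metis less_irrefl zero_complex.sel(1))
  then have "?g holomorphic_on cball 0 1"
    by (intro holomorphic_intros) auto
  from Re_holomorphic_mean_value_circle[OF this]
  have "((\<lambda>t. Re (?g (cis t))) has_integral (2 * pi)) {0..2*pi}" by simp
  moreover have "Re (?g (cis t)) = (1 - b\<^sup>2) * (1 / (1 + b\<^sup>2 - 2 * b * cos t))" for t
  proof -
    have "Re (?g (cis t)) = ((1 + b * cos t) * (1 - b * cos t) - (b * sin t) * (b * sin t))
        / (cmod (1 - of_real b * cis t))\<^sup>2"
      by (simp add: Re_divide')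
    also have "(1 + b * cos t) * (1 - b * cos t) - (b * sin t) * (b * sin t)
        = 1 - b\<^sup>2 * ((sin t)\<^sup>2 + (cos t)\<^sup>2)"
      by algebra
    finally show ?thesis by (simp add: cmod_one_minus_cis_squared)
  qed
  ultimately have "((\<lambda>t. (1 - b\<^sup>2) * (1 / (1 + b\<^sup>2 - 2 * b * cos t))) has_integral (2 * pi))
      {0..2*pi}"
    by (simp only:)
  moreover have "1 - b\<^sup>2 \<noteq> 0" using assms by (simp add: abs_square_eq_1)
  ultimately show ?thesis using has_integral_mult_right_iff by blast
qed

lemma has_integral_ln_poisson_denom:
  fixes b :: real
  assumes "\<bar>b\<bar> < 1"
  shows "((\<lambda>t. ln (1 + b\<^sup>2 - 2 * b * cos t)) has_integral 0) {0..2*pi}"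
proof -
  let ?g = "\<lambda>z::complex. 2 * Ln (1 - of_real b * z)"
  have nonpos: "1 - of_real b * z \<notin> \<real>\<^sub>\<le>\<^sub>0" if "z \<in> cball 0 1" for z :: complex
    using Re_one_minus_mult_pos[OF assms that] by (auto simp: complex_nonpos_Reals_iff)
  then have "?g holomorphic_on cball 0 1"
    by (intro holomorphic_intros) auto
  from Re_holomorphic_mean_value_circle[OF this]
  have "((\<lambda>t. Re (?g (cis t))) has_integral 0) {0..2*pi}" by simp
  moreover have "Re (?g (cis t)) = ln (1 + b\<^sup>2 - 2 * b * cos t)" for t
  proof -
    have "1 - of_real b * cis t \<noteq> 0" using nonpos[of "cis t"] by auto
    then have "Re (?g (cis t)) = ln ((cmod (1 - of_real b * cis t))\<^sup>2)"
      by (simp add: ln_realpow)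
    then show ?thesis by (simp only: cmod_one_minus_cis_squared)
  qed
  ultimately show ?thesis by simp
qed

text \<open>For r = R_e/s2 (the normalised steady-state innovation variance of the Kalman predictor)
  the Riccati equation reads r^2 - riccati_coeff G a * r + a^2 = 0; innov_var is its larger root,
  the r_e of the paper.\<close>

definition riccati_coeff :: "real \<Rightarrow> real \<Rightarrow> real" where
  "riccati_coeff G a = 1 + a\<^sup>2 + G * (1 - a\<^sup>2)"

definition innov_var :: "real \<Rightarrow> real \<Rightarrow> real" where
  "innov_var G a = (riccati_coeff G a + sqrt ((riccati_coeff G a)\<^sup>2 - 4 * a\<^sup>2)) / 2"

lemma riccati_discr_eq:
  "(riccati_coeff G a)\<^sup>2 - 4 * a\<^sup>2 = ((1 - G) * (1 - a\<^sup>2))\<^sup>2 + 4 * G * (1 - a\<^sup>2)"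
  unfolding riccati_coeff_def by (simp add: power2_eq_square algebra_simps)

lemma Re_of_div_eq_innov_var:
  assumes "s2 > 0"
  shows "Re_of Pi0 s2 a / s2 = innov_var (Pi0 / s2) a"
proof -
  define G where "G = Pi0 / s2"
  have Pi0: "Pi0 = G * s2" using assms by (simp add: G_def)
  have "(s2 * (1 - a\<^sup>2) - Q_of Pi0 a)\<^sup>2 + 4 * s2 * Q_of Pi0 a
      = s2\<^sup>2 * ((riccati_coeff G a)\<^sup>2 - 4 * a\<^sup>2)"
    unfolding riccati_discr_eq Q_of_def Pi0 by (simp add: power2_eq_square algebra_simps)
  then have "sqrt ((s2 * (1 - a\<^sup>2) - Q_of Pi0 a)\<^sup>2 + 4 * s2 * Q_of Pi0 a)
      = s2 * sqrt ((riccati_coeff G a)\<^sup>2 - 4 * a\<^sup>2)"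
    using assms by (simp add: real_sqrt_mult)
  then show ?thesis
    unfolding Re_of_def P_of_def innov_var_def G_def[symmetric]
    using assms by (simp add: Q_of_def Pi0 riccati_coeff_def field_simps)
qed

lemma
  assumes "0 \<le> G" "\<bar>a\<bar> \<le> 1"
  shows innov_var_root: "(innov_var G a)\<^sup>2 - riccati_coeff G a * innov_var G a + a\<^sup>2 = 0"
    and one_le_innov_var: "1 \<le> innov_var G a"
    and innov_var_le: "innov_var G a \<le> 1 + G"
proof -
  define c where "c = riccati_coeff G a"
  define S where "S = sqrt (c\<^sup>2 - 4 * a\<^sup>2)"
  define u where "u = 1 - a\<^sup>2"
  have u: "0 \<le> u" "u \<le> 1" using assms(2) by (auto simp: u_def abs_square_le_1)
  have c: "c = 2 - u + G * u" and a2: "a\<^sup>2 = 1 - u"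
    by (simp_all add: c_def riccati_coeff_def u_def)
  have "0 \<le> c\<^sup>2 - 4 * a\<^sup>2"
    unfolding c_def riccati_discr_eq using assms(1) u by (simp add: u_def)
  then have S2: "S\<^sup>2 = c\<^sup>2 - 4 * a\<^sup>2" and S0: "0 \<le> S" by (simp_all add: S_def)
  have r: "innov_var G a = (c + S) / 2" by (simp add: innov_var_def S_def c_def)
  show "(innov_var G a)\<^sup>2 - riccati_coeff G a * innov_var G a + a\<^sup>2 = 0"
    unfolding r c_def[symmetric] using S2 by (simp add: power2_eq_square field_simps)
  have "(2 - c)\<^sup>2 \<le> S\<^sup>2"
    unfolding S2 a2 c using assms(1) u by (simp add: power2_eq_square algebra_simps)
  then have "2 - c \<le> S" using S0 by (rule power2_le_imp_le)
  then show "1 \<le> innov_var G a" unfolding r by simp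
  have "S\<^sup>2 \<le> (2 + 2 * G - c)\<^sup>2"
  proof -
    have "(2 + 2 * G - c)\<^sup>2 - S\<^sup>2 = 4 * G\<^sup>2 * (1 - u)"
      unfolding S2 a2 c by (simp add: power2_eq_square algebra_simps)
    moreover have "0 \<le> 4 * G\<^sup>2 * (1 - u)" using u by simp
    ultimately show ?thesis by linarith
  qed
  moreover have "G * u \<le> G" using assms(1) u by (simp add: mult_left_le)
  then have "0 \<le> 2 + 2 * G - c" unfolding c using assms(1) u by linarith
  ultimately have "S \<le> 2 + 2 * G - c" by (rule power2_le_imp_le)
  then show "innov_var G a \<le> 1 + G" unfolding r by simp
qed

lemma riccati_root_iff:
  "r\<^sup>2 - riccati_coeff G a * r + a\<^sup>2 = 0 \<longleftrightarrow> a\<^sup>2 * (1 - (1 - G) * r) = r * (1 + G - r)"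
  unfolding riccati_coeff_def by (auto simp: power2_eq_square algebra_simps)

lemma riccati_root_identity:
  assumes "r\<^sup>2 - riccati_coeff G a * r + a\<^sup>2 = 0"
  shows "(1 - a\<^sup>2) * r * (1 + G - (1 - G) * r) = (r - 1) * (r\<^sup>2 - a\<^sup>2)"
proof -
  have "(1 - a\<^sup>2) * r * (1 + G - (1 - G) * r) - (r - 1) * (r\<^sup>2 - a\<^sup>2)
      = - (r + 1) * (r\<^sup>2 - riccati_coeff G a * r + a\<^sup>2)"
    unfolding riccati_coeff_def by (simp add: power2_eq_square algebra_simps)
  with assms show ?thesis by simp
qed

lemma innov_var_eq_iff:
  assumes "0 \<le> G" "\<bar>a\<bar> \<le> 1" "1 \<le> r"
  shows "innov_var G a = r \<longleftrightarrow> a\<^sup>2 * (1 - (1 - G) * r) = r * (1 + G - r)"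
proof
  assume "innov_var G a = r"
  with innov_var_root[OF assms(1,2)] show "a\<^sup>2 * (1 - (1 - G) * r) = r * (1 + G - r)"
    by (simp add: riccati_root_iff)
next
  assume "a\<^sup>2 * (1 - (1 - G) * r) = r * (1 + G - r)"
  then have root: "r\<^sup>2 - riccati_coeff G a * r + a\<^sup>2 = 0" by (simp add: riccati_root_iff)
  have r0: "r > 0" using assms(3) by simp
  then have c: "riccati_coeff G a = r + a\<^sup>2 / r"
    using root by (simp add: field_simps power2_eq_square)
  have "a\<^sup>2 \<le> 1" using assms(2) by (simp add: abs_square_le_1)
  also have "1 \<le> r\<^sup>2" using assms(3) by (simp add: one_le_power)
  finally have "a\<^sup>2 \<le> r\<^sup>2" .
  then have "a\<^sup>2 / r \<le> r" using r0 by (simp add: divide_le_eq power2_eq_square)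
  moreover have "(riccati_coeff G a)\<^sup>2 - 4 * a\<^sup>2 = (r - a\<^sup>2 / r)\<^sup>2"
    unfolding c using r0 by (simp add: power2_eq_square field_simps)
  ultimately show "innov_var G a = r" unfolding innov_var_def c by simp
qed

text \<open>The two roots of the Riccati quadratic are r and a^2/r; this is the spectral factorisation
  of the numerator of S_y/s2.\<close>

lemma riccati_poisson_factorization:
  assumes "0 \<le> G" "\<bar>a\<bar> \<le> 1"
  defines "r \<equiv> innov_var G a"
  shows "1 + a\<^sup>2 - 2 * a * cos w + G * (1 - a\<^sup>2) = r * (1 + (a / r)\<^sup>2 - 2 * (a / r) * cos w)"
proof -
  have "r > 0" using one_le_innov_var[OF assms(1,2)] by (simp add: r_def)
  moreover have "riccati_coeff G a = r + a\<^sup>2 / r"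
    using innov_var_root[OF assms(1,2)] \<open>r > 0\<close> by (simp add: r_def field_simps power2_eq_square)
  ultimately show ?thesis
    by (simp add: riccati_coeff_def field_simps power2_eq_square)
qed

definition exponent_of_innov :: "real \<Rightarrow> real \<Rightarrow> real" where
  "exponent_of_innov G r = ln r - G * (r - 1) / (1 + G - (1 - G) * r)"

lemma exponent_denom_pos:
  fixes G r :: real
  assumes "0 < G" "1 \<le> r" "r \<le> 1 + G"
  shows "1 + G - (1 - G) * r > 0"
proof (cases "G \<le> 1")
  case True
  have "(1 - G) * r \<le> (1 - G) * (1 + G)" by (rule mult_left_mono) (use True assms in simp_all)
  also have "\<dots> = 1 + G - G * (1 + G)" by (simp add: algebra_simps)
  also have "\<dots> < 1 + G" using assms(1) by simp
  finally show ?thesis by simp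
next
  case False
  then have "(1 - G) * r \<le> 0" using assms by (intro mult_nonpos_nonneg) auto
  then show ?thesis using assms by linarith
qed

lemma gauss_KL_spec_y:
  assumes "s2 > 0" "0 \<le> G" "\<bar>a\<bar> < 1"
  defines "r \<equiv> innov_var G a" and "b \<equiv> a / innov_var G a"
  shows "gauss_KL s2 (spec_y (G * s2) s2 a w)
    = (ln r + ln (1 + b\<^sup>2 - 2 * b * cos w) - ln (1 + a\<^sup>2 - 2 * a * cos w)
       - G * (1 - a\<^sup>2) / r * (1 / (1 + b\<^sup>2 - 2 * b * cos w))) / 2"
proof -
  define da where "da = 1 + a\<^sup>2 - 2 * a * cos w"
  define db where "db = 1 + b\<^sup>2 - 2 * b * cos w"
  have r1: "1 \<le> r" using one_le_innov_var[OF assms(2), of a] assms(3) by (simp add: r_def)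
  then have r0: "r > 0" by simp
  have "\<bar>b\<bar> < 1" using assms(3) r1 by (simp add: b_def r_def[symmetric] abs_divide divide_less_eq)
  then have "da > 0" "db > 0"
    using poisson_denom_pos[OF assms(3), of w] poisson_denom_pos[of b w] by (simp_all add: da_def db_def)
  have factor: "da + G * (1 - a\<^sup>2) = r * db"
    using riccati_poisson_factorization[OF assms(2), of a w] assms(3)
    by (simp add: da_def db_def r_def b_def)
  have "spec_y (G * s2) s2 a w = s2 * ((da + G * (1 - a\<^sup>2)) / da)"
    using \<open>da > 0\<close> by (simp add: spec_y_def da_def field_simps)
  also have "\<dots> = s2 * (r * db / da)" by (simp only: factor)
  finally have "spec_y (G * s2) s2 a w = s2 * (r * db / da)" .
  then have "gauss_KL s2 (spec_y (G * s2) s2 a w) = (ln (r * db / da) + (da / (r * db) - 1)) / 2"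
    using assms(1) by (simp add: gauss_KL_def)
  also have "ln (r * db / da) = ln r + ln db - ln da"
    using r0 \<open>da > 0\<close> \<open>db > 0\<close> by (simp add: ln_div ln_mult)
  also have "da / (r * db) - 1 = - (G * (1 - a\<^sup>2) / r * (1 / db))"
    unfolding eq_diff_eq[THEN iffD2, OF factor] using r0 \<open>db > 0\<close> by (simp add: field_simps)
  finally show ?thesis by (simp add: da_def db_def)
qed

lemma err_exp_eq_exponent_of_innov:
  assumes "s2 > 0" "Pi0 > 0" "\<bar>a\<bar> \<le> 1"
  shows "err_exp Pi0 s2 a = exponent_of_innov (Pi0 / s2) (innov_var (Pi0 / s2) a) / 2"
proof (cases "\<bar>a\<bar> = 1")
  case True
  then have "a\<^sup>2 = 1" by (simp add: abs_square_eq_1)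
  then show ?thesis
    using assms(1) by (simp add: err_exp_def spec_y_def gauss_KL_def exponent_of_innov_def
        innov_var_def riccati_coeff_def)
next
  case False
  define G where "G = Pi0 / s2"
  define r where "r = innov_var G a"
  define b where "b = a / r"
  have G: "G > 0" and Pi0: "Pi0 = G * s2" using assms(1,2) by (simp_all add: G_def)
  have a: "\<bar>a\<bar> < 1" using assms(3) False by simp
  have r1: "1 \<le> r" and r2: "r \<le> 1 + G" and root: "r\<^sup>2 - riccati_coeff G a * r + a\<^sup>2 = 0"
    using one_le_innov_var innov_var_le innov_var_root G assms(3) by (simp_all add: r_def)
  have b: "\<bar>b\<bar> < 1" using a r1 by (simp add: b_def abs_divide divide_less_eq)
  have "a\<^sup>2 < 1" "1 \<le> r\<^sup>2" using a r1 by (simp_all add: abs_square_less_1 one_le_power)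
  then have ra: "r\<^sup>2 - a\<^sup>2 \<noteq> 0" by simp
  have "((\<lambda>w. ln r) has_integral 2 * pi * ln r) {0..2*pi}"
    using has_integral_const_real[of "ln r" 0 "2 * pi"] by simp
  then have "((\<lambda>w. gauss_KL s2 (spec_y Pi0 s2 a w)) has_integral
      (2 * pi * ln r + 0 - 0 - G * (1 - a\<^sup>2) / r * (2 * pi / (1 - b\<^sup>2))) / 2) {0..2*pi}"
    unfolding Pi0 gauss_KL_spec_y[OF assms(1) less_imp_le[OF G] a] r_def[symmetric] b_def[symmetric]
    by (intro has_integral_divide has_integral_diff has_integral_add has_integral_mult_right
        has_integral_ln_poisson_denom
        has_integral_inverse_poisson_denom a b)
  then have "err_exp Pi0 s2 a
      = (2 * pi * ln r + 0 - 0 - G * (1 - a\<^sup>2) / r * (2 * pi / (1 - b\<^sup>2))) / 2 / (2 * pi)"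
    by (simp add: err_exp_def integral_unique)
  also have "\<dots> = (ln r - G * (1 - a\<^sup>2) * r / (r\<^sup>2 - a\<^sup>2)) / 2"
    using r1 ra by (simp add: b_def field_simps power2_eq_square)
  also have "G * (1 - a\<^sup>2) * r / (r\<^sup>2 - a\<^sup>2) = G * (r - 1) / (1 + G - (1 - G) * r)"
    using riccati_root_identity[OF root] exponent_denom_pos[OF G r1 r2] ra
    by (simp add: frac_eq_eq)
  finally show ?thesis by (simp add: exponent_of_innov_def G_def r_def)
qed

text \<open>The derivative of exponent_of_innov G in r is 1/r - 2 G^2 / (1 + G - (1 - G) r)^2,
  so the hypothesis critical says that rc is a critical point.\<close>

lemma exponent_of_innov_le_critical:
  fixes G r rc :: real
  assumes "r > 0" "rc > 0" "1 + G - (1 - G) * r \<noteq> 0" "1 + G - (1 - G) * rc \<noteq> 0"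
    and critical: "(1 + G - (1 - G) * rc)\<^sup>2 = 2 * G\<^sup>2 * rc"
  shows "exponent_of_innov G r
      + 2 * G\<^sup>2 * (1 - G) * (r - rc)\<^sup>2 / ((1 + G - (1 - G) * rc)\<^sup>2 * (1 + G - (1 - G) * r))
    \<le> exponent_of_innov G rc"
proof -
  define D where "D = 1 + G - (1 - G) * r"
  define E where "E = 1 + G - (1 - G) * rc"
  have D: "D \<noteq> 0" and E: "E \<noteq> 0" using assms(3,4) by (simp_all add: D_def E_def)
  have E2: "E\<^sup>2 = 2 * G\<^sup>2 * rc" using critical by (simp add: E_def)
  with E have "G \<noteq> 0" by auto
  have "ln r - ln rc = ln (r / rc)" using assms(1,2) by (simp add: ln_div)
  also have "\<dots> \<le> r / rc - 1" using assms(1,2) by (intro ln_le_minus_one) simp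
  also have "\<dots> = (r - rc) * (1 / rc)" using assms(2) by (simp add: field_simps)
  also have "1 / rc = 2 * G\<^sup>2 / E\<^sup>2"
    using assms(2) E2 \<open>G \<noteq> 0\<close> by (simp add: field_simps)
  finally have "ln r - ln rc \<le> (r - rc) * (2 * G\<^sup>2 / E\<^sup>2)" .
  moreover have "exponent_of_innov G r - exponent_of_innov G rc
      = (ln r - ln rc) - 2 * G\<^sup>2 * (r - rc) / (D * E)"
  proof -
    have "G * (r - 1) / D - G * (rc - 1) / E = G * ((r - 1) * E - (rc - 1) * D) / (D * E)"
      using D E by (simp add: field_simps)
    also have "(r - 1) * E - (rc - 1) * D = 2 * G * (r - rc)"
      by (simp add: D_def E_def algebra_simps)
    finally show ?thesis
      by (simp add: exponent_of_innov_def D_def[symmetric] E_def[symmetric] power2_eq_square)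
  qed
  moreover have "(r - rc) * (2 * G\<^sup>2 / E\<^sup>2) - 2 * G\<^sup>2 * (r - rc) / (D * E)
      = - (2 * G\<^sup>2 * (1 - G) * (r - rc)\<^sup>2 / (E\<^sup>2 * D))"
  proof -
    have "(r - rc) * (2 * G\<^sup>2 / E\<^sup>2) - 2 * G\<^sup>2 * (r - rc) / (D * E)
        = 2 * G\<^sup>2 * (r - rc) * (D - E) / (E\<^sup>2 * D)"
      using D E by (simp add: field_simps power2_eq_square)
    also have "2 * G\<^sup>2 * (r - rc) * (D - E) = - (2 * G\<^sup>2 * (1 - G) * (r - rc)\<^sup>2)"
      by (simp add: D_def E_def power2_eq_square algebra_simps)
    finally show ?thesis by (simp only: minus_divide_left)
  qed
  ultimately show ?thesis
    unfolding D_def[symmetric] E_def[symmetric] by linarith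
qed

lemma exponent_of_innov_max:
  fixes G r rc :: real
  assumes "0 < G" "G < 1" "1 \<le> r" "r \<le> 1 + G" "rc > 0" "1 + G - (1 - G) * rc > 0"
    and critical: "(1 + G - (1 - G) * rc)\<^sup>2 = 2 * G\<^sup>2 * rc"
  shows "exponent_of_innov G r \<le> exponent_of_innov G rc"
    and "exponent_of_innov G rc \<le> exponent_of_innov G r \<Longrightarrow> r = rc"
proof -
  have D: "1 + G - (1 - G) * r > 0" using exponent_denom_pos assms(1,3,4) by blast
  define deficit where "deficit =
    2 * G\<^sup>2 * (1 - G) * (r - rc)\<^sup>2 / ((1 + G - (1 - G) * rc)\<^sup>2 * (1 + G - (1 - G) * r))"
  have le: "exponent_of_innov G r + deficit \<le> exponent_of_innov G rc"
    unfolding deficit_def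
    using exponent_of_innov_le_critical[OF _ assms(5) _ _ critical] assms(3,6) D by simp
  have "deficit \<ge> 0" unfolding deficit_def using assms(1,2) D by simp
  with le show "exponent_of_innov G r \<le> exponent_of_innov G rc" by linarith
  assume "exponent_of_innov G rc \<le> exponent_of_innov G r"
  with le have "deficit \<le> 0" by linarith
  then have "(r - rc)\<^sup>2 \<le> 0"
    unfolding deficit_def using assms(1,2,6) D by (simp add: divide_le_0_iff mult_le_0_iff)
  then show "r = rc" by simp
qed

lemma critical_innov_exists:
  fixes G :: real
  assumes "0 < G" "G < 1"
  obtains s where "1 < s" "s\<^sup>2 < 1 + G" "1 + G - (1 - G) * s\<^sup>2 = sqrt 2 * G * s"
proof -
  define p where "p s = (1 - G) * s\<^sup>2 + sqrt 2 * G * s - (1 + G)" for s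
  define t where "t = sqrt (1 + G)"
  have t: "1 < t" "t < sqrt 2" "t\<^sup>2 = 1 + G" using assms by (simp_all add: t_def)
  have "p 1 = G * (sqrt 2 - 2)" by (simp add: p_def algebra_simps)
  moreover have "sqrt 2 < 2" by (rule real_less_lsqrt) auto
  ultimately have "p 1 < 0" using assms(1) by (simp add: mult_pos_neg)
  have "p t = G * t * (sqrt 2 - t)" using t(3) by (simp add: p_def power2_eq_square algebra_simps)
  then have "p t > 0" using assms(1) t by simp
  have "continuous_on {1..t} p" unfolding p_def by (intro continuous_intros)
  then obtain s where s: "1 \<le> s" "s \<le> t" "p s = 0"
    using IVT'[of p 1 0 t] \<open>p 1 < 0\<close> \<open>p t > 0\<close> t(1) by auto
  have "s \<noteq> 1" "s \<noteq> t" using s(3) \<open>p 1 < 0\<close> \<open>p t > 0\<close> by auto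
  with s have "1 < s" "s < t" by simp_all
  then have "s\<^sup>2 < 1 + G" using power_strict_mono[of s t 2] t(3) by simp
  moreover have "1 + G - (1 - G) * s\<^sup>2 = sqrt 2 * G * s" using s(3) by (simp add: p_def)
  ultimately show ?thesis using that \<open>1 < s\<close> by blast
qed

lemma innov_var_inverse:
  fixes G rc :: real
  assumes "0 \<le> G" "1 \<le> rc" "rc \<le> 1 + G" "1 - (1 - G) * rc > 0"
  obtains a where "0 \<le> a" "innov_var G a = rc" "1 - a\<^sup>2 = (rc - 1)\<^sup>2 / (1 - (1 - G) * rc)"
proof -
  define a where "a = sqrt (rc * (1 + G - rc) / (1 - (1 - G) * rc))"
  have a2: "a\<^sup>2 = rc * (1 + G - rc) / (1 - (1 - G) * rc)"
    using assms by (simp add: a_def)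
  have one_minus: "1 - a\<^sup>2 = (rc - 1)\<^sup>2 / (1 - (1 - G) * rc)"
    unfolding a2 using assms(4) by (simp add: field_simps power2_eq_square)
  moreover have "0 \<le> (rc - 1)\<^sup>2 / (1 - (1 - G) * rc)" using assms(4) by simp
  ultimately have "a\<^sup>2 \<le> 1" by linarith
  then have "\<bar>a\<bar> \<le> 1" by (simp add: abs_square_le_1)
  moreover have "a\<^sup>2 * (1 - (1 - G) * rc) = rc * (1 + G - rc)"
    unfolding a2 using assms(4) by simp
  ultimately have "innov_var G a = rc" using innov_var_eq_iff assms(1,2) by blast
  moreover have "0 \<le> a" using assms by (simp add: a_def)
  ultimately show ?thesis using that one_minus by blast
qed

lemma stationarity_eq_critical:
  assumes "0 \<le> G" "\<bar>a\<bar> \<le> 1"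
  defines "r \<equiv> innov_var G a"
  shows "(1 - (1 - G) * r)\<^sup>2 * ((riccati_coeff G a)\<^sup>2 - 2 * (r + a ^ 4 / r))
    = (r - 1)\<^sup>2 * ((1 + G - (1 - G) * r)\<^sup>2 - 2 * G\<^sup>2 * r)"
proof -
  define D where "D = 1 - (1 - G) * r"
  define N where "N = 1 + G - r"
  have "r > 0" using one_le_innov_var[OF assms(1,2)] by (simp add: r_def)
  have root: "r\<^sup>2 - riccati_coeff G a * r + a\<^sup>2 = 0"
    using innov_var_root[OF assms(1,2)] by (simp add: r_def)
  then have aD: "a\<^sup>2 * D = r * N" by (simp add: riccati_root_iff D_def N_def)
  have "D * riccati_coeff G a = r * D + N"
  proof -
    have "riccati_coeff G a = r + a\<^sup>2 / r"
      using root \<open>r > 0\<close> by (simp add: field_simps power2_eq_square)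
    then have "D * riccati_coeff G a = r * D + a\<^sup>2 * D / r" by (simp add: algebra_simps)
    then show ?thesis using aD \<open>r > 0\<close> by simp
  qed
  moreover have "D\<^sup>2 * (a ^ 4 / r) = r * N\<^sup>2"
  proof -
    have "a ^ 4 = (a\<^sup>2)\<^sup>2" by (simp flip: power_mult)
    then have "D\<^sup>2 * (a ^ 4 / r) = (a\<^sup>2 * D)\<^sup>2 / r" by (simp add: power_mult_distrib)
    also have "\<dots> = r * N\<^sup>2" using aD \<open>r > 0\<close> by (simp add: power2_eq_square)
    finally show ?thesis .
  qed
  ultimately have "D\<^sup>2 * ((riccati_coeff G a)\<^sup>2 - 2 * (r + a ^ 4 / r))
      = (r * D + N)\<^sup>2 - 2 * r * D\<^sup>2 - 2 * r * N\<^sup>2"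
    by (simp add: power_mult_distrib[symmetric] algebra_simps)
  also have "\<dots> = (r - 1)\<^sup>2 * ((1 + G - (1 - G) * r)\<^sup>2 - 2 * G\<^sup>2 * r)"
    by (simp add: D_def N_def power2_eq_square algebra_simps)
  finally show ?thesis by (simp add: D_def)
qed

lemma critical_innov_point:
  fixes G :: real
  assumes "0 < G" "G < 1"
  obtains am rc where "0 < am" "am < 1" "innov_var G am = rc" "1 < rc"
    "1 + G - (1 - G) * rc > 0" "(1 + G - (1 - G) * rc)\<^sup>2 = 2 * G\<^sup>2 * rc"
    "1 - (1 - G) * rc > 0" "1 - am\<^sup>2 \<le> G / (sqrt 2 - 1)"
proof -
  obtain s where s: "1 < s" "s\<^sup>2 < 1 + G" and E: "1 + G - (1 - G) * s\<^sup>2 = sqrt 2 * G * s"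
    using critical_innov_exists[OF assms] .
  define rc where "rc = s\<^sup>2"
  have rc: "1 < rc" "rc < 1 + G" using s by (simp_all add: rc_def one_less_power)
  have E_pos: "1 + G - (1 - G) * rc > 0" using E s(1) assms(1) by (simp add: rc_def)
  have critical: "(1 + G - (1 - G) * rc)\<^sup>2 = 2 * G\<^sup>2 * rc"
    using E by (simp add: rc_def power_mult_distrib)
  have "sqrt 2 * 1 \<le> sqrt 2 * s" using s(1) by simp
  then have D_ge: "G * (sqrt 2 - 1) \<le> 1 - (1 - G) * rc"
    using E assms(1) by (simp add: rc_def algebra_simps mult_left_mono)
  have "sqrt 2 > 1" by simp
  then have sqrt2: "G * (sqrt 2 - 1) > 0" using assms(1) by simp
  with D_ge have D_pos: "1 - (1 - G) * rc > 0" by linarith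
  obtain am where am: "0 \<le> am" "innov_var G am = rc"
    and one_minus: "1 - am\<^sup>2 = (rc - 1)\<^sup>2 / (1 - (1 - G) * rc)"
    using innov_var_inverse[of G rc] assms(1) rc D_pos by auto
  have "innov_var G 0 \<noteq> rc" using innov_var_eq_iff[of G 0 rc] assms(1) rc by simp
  with am(2) have "am \<noteq> 0" by auto
  moreover have "0 < (rc - 1)\<^sup>2 / (1 - (1 - G) * rc)" using rc(1) D_pos by simp
  then have "am\<^sup>2 < 1" using one_minus by linarith
  ultimately have am_bounds: "0 < am" "am < 1" using am(1) by (simp_all add: abs_square_less_1)
  have "(rc - 1)\<^sup>2 \<le> G\<^sup>2" using rc by (intro power_mono) simp_all
  then have "1 - am\<^sup>2 \<le> G\<^sup>2 / (G * (sqrt 2 - 1))"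
    unfolding one_minus using D_ge D_pos sqrt2 by (intro frac_le) simp_all
  also have "\<dots> = G / (sqrt 2 - 1)" using assms(1) by (simp add: power2_eq_square)
  finally show ?thesis using that am_bounds am(2) rc(1) E_pos critical D_pos by blast
qed

lemma err_exp_argmax:
  assumes "s2 > 0" "Pi0 > 0" "Pi0 / s2 < 1"
  obtains am where "0 < am" "am < 1"
    "\<forall>a\<in>{0..1}. err_exp Pi0 s2 a \<le> err_exp Pi0 s2 am"
    "\<forall>a\<in>{0..1}. err_exp Pi0 s2 am \<le> err_exp Pi0 s2 a \<longrightarrow> a = am"
    "opt_eq_lhs Pi0 s2 am = 0"
    "1 - am\<^sup>2 \<le> (Pi0 / s2) / (sqrt 2 - 1)"
proof -
  define G where "G = Pi0 / s2"
  have G: "0 < G" "G < 1" using assms by (simp_all add: G_def)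
  obtain am rc where am: "0 < am" "am < 1" "innov_var G am = rc" and rc: "1 < rc"
    and E_pos: "1 + G - (1 - G) * rc > 0" and critical: "(1 + G - (1 - G) * rc)\<^sup>2 = 2 * G\<^sup>2 * rc"
    and D_pos: "1 - (1 - G) * rc > 0" and bound: "1 - am\<^sup>2 \<le> G / (sqrt 2 - 1)"
    using critical_innov_point[OF G] .
  have K: "err_exp Pi0 s2 a = exponent_of_innov G (innov_var G a) / 2" if "a \<in> {0..1}" for a
    using err_exp_eq_exponent_of_innov[OF assms(1,2)] that by (simp add: G_def)
  have max: "exponent_of_innov G (innov_var G a) \<le> exponent_of_innov G rc"
      "exponent_of_innov G rc \<le> exponent_of_innov G (innov_var G a) \<Longrightarrow> innov_var G a = rc"
    if "a \<in> {0..1}" for a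
    using exponent_of_innov_max[OF G one_le_innov_var innov_var_le _ E_pos critical] G(1) that rc
    by auto
  have K_am: "err_exp Pi0 s2 am = exponent_of_innov G rc / 2" using K[of am] am by simp
  have "\<forall>a\<in>{0..1}. err_exp Pi0 s2 a \<le> err_exp Pi0 s2 am"
    using max(1) K K_am by fastforce
  moreover have "\<forall>a\<in>{0..1}. err_exp Pi0 s2 am \<le> err_exp Pi0 s2 a \<longrightarrow> a = am"
  proof (intro ballI impI)
    fix a :: real assume a: "a \<in> {0..1}" and "err_exp Pi0 s2 am \<le> err_exp Pi0 s2 a"
    then have "innov_var G a = rc" using max(2)[OF a] K[OF a] K_am by simp
    then have "a\<^sup>2 * (1 - (1 - G) * rc) = am\<^sup>2 * (1 - (1 - G) * rc)"
      using innov_var_eq_iff G(1) a am rc by simp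
    then show "a = am" using D_pos a am(1) by (simp add: power2_eq_iff_nonneg)
  qed
  moreover have "opt_eq_lhs Pi0 s2 am = 0"
  proof -
    have "(1 - (1 - G) * rc)\<^sup>2 * ((riccati_coeff G am)\<^sup>2 - 2 * (rc + am ^ 4 / rc)) = 0"
      using stationarity_eq_critical[of G am] G(1) am critical by simp
    then show ?thesis
      using D_pos assms(1) am(3)
      by (simp add: opt_eq_lhs_def Re_of_div_eq_innov_var riccati_coeff_def G_def[symmetric])
  qed
  ultimately show ?thesis using that am(1,2) bound by (simp add: G_def)
qed

lemma exp_spacing_argmax:
  fixes f :: "real \<Rightarrow> real"
  assumes "0 < am" "am < 1" "A > 0" "\<forall>a\<in>{0..1}. f a \<le> f am"
  shows "let \<Delta>s = - ln am / A in
    \<Delta>s > 0 \<and> (\<forall>\<Delta>\<ge>0. f (exp (- A * \<Delta>)) \<le> f (exp (- A * \<Delta>s)))"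
proof -
  have "ln am < 0" using assms(1,2) by simp
  then have "- ln am / A > 0" using assms(3) by (simp add: divide_neg_pos)
  moreover have "exp (- A * (- ln am / A)) = am" using assms(1,3) by simp
  moreover have "exp (- A * \<Delta>) \<in> {0..1}" if "\<Delta> \<ge> 0" for \<Delta>
    using that assms(3) by simp
  ultimately show ?thesis using assms(4) by (simp add: Let_def)
qed

lemma err_exp_argmax_gap:
  assumes "s2 > 0" "Pi0 > 0" "Pi0 / s2 < 1" "am \<in> {0..1}"
    and max: "\<forall>a\<in>{0..1}. err_exp Pi0 s2 a \<le> err_exp Pi0 s2 am"
  shows "1 - am \<le> (Pi0 / s2) / (sqrt 2 - 1)"
proof -
  obtain am' where "0 < am'" "am' < 1"
    and "\<forall>a\<in>{0..1}. err_exp Pi0 s2 a \<le> err_exp Pi0 s2 am'"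
    and unique: "\<forall>a\<in>{0..1}. err_exp Pi0 s2 am' \<le> err_exp Pi0 s2 a \<longrightarrow> a = am'"
    and "opt_eq_lhs Pi0 s2 am' = 0"
    and bound: "1 - am'\<^sup>2 \<le> (Pi0 / s2) / (sqrt 2 - 1)"
    by (rule err_exp_argmax[OF assms(1-3)])
  then have "err_exp Pi0 s2 am' \<le> err_exp Pi0 s2 am" using max by simp
  then have "am = am'" using unique assms(4) by blast
  moreover have "am'\<^sup>2 \<le> am'"
    using \<open>0 < am'\<close> \<open>am' < 1\<close> by (simp add: power2_eq_square mult_left_le)
  ultimately show ?thesis using bound by linarith
qed

theorem theorem4:
  fixes s2 :: real
  assumes s2_pos: "s2 > 0"
  shows
    "(\<forall>Pi0. 0 < Pi0 \<and> Pi0 / s2 < 1 \<longrightarrow>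
        (\<exists>am. 0 < am \<and> am < 1
           \<and> (\<forall>a\<in>{0..1}. err_exp Pi0 s2 a \<le> err_exp Pi0 s2 am)
           \<and> opt_eq_lhs Pi0 s2 am = 0
           \<and> (\<forall>A>0. let \<Delta>s = - ln am / A in
                 \<Delta>s > 0 \<and> (\<forall>\<Delta>\<ge>0. err_exp Pi0 s2 (exp (- A * \<Delta>))
                                    \<le> err_exp Pi0 s2 (exp (- A * \<Delta>s))))))
     \<and> (\<forall>\<epsilon>>0. \<exists>\<delta>>0. \<forall>Pi0 am. 0 < Pi0 \<and> Pi0 / s2 < \<delta> \<and> Pi0 / s2 < 1
            \<and> am \<in> {0..1} \<and> (\<forall>a\<in>{0..1}. err_exp Pi0 s2 a \<le> err_exp Pi0 s2 am)
            \<longrightarrow> am > 1 - \<epsilon>)"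
proof (intro conjI allI impI)
  fix Pi0 :: real assume "0 < Pi0 \<and> Pi0 / s2 < 1"
  then have "0 < Pi0" "Pi0 / s2 < 1" by simp_all
  then obtain am where "0 < am" "am < 1"
    and "\<forall>a\<in>{0..1}. err_exp Pi0 s2 a \<le> err_exp Pi0 s2 am"
    and "\<forall>a\<in>{0..1}. err_exp Pi0 s2 am \<le> err_exp Pi0 s2 a \<longrightarrow> a = am"
    and "opt_eq_lhs Pi0 s2 am = 0"
    and "1 - am\<^sup>2 \<le> (Pi0 / s2) / (sqrt 2 - 1)"
    by (rule err_exp_argmax[OF s2_pos])
  then show "\<exists>am. 0 < am \<and> am < 1
           \<and> (\<forall>a\<in>{0..1}. err_exp Pi0 s2 a \<le> err_exp Pi0 s2 am)
           \<and> opt_eq_lhs Pi0 s2 am = 0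
           \<and> (\<forall>A>0. let \<Delta>s = - ln am / A in
                 \<Delta>s > 0 \<and> (\<forall>\<Delta>\<ge>0. err_exp Pi0 s2 (exp (- A * \<Delta>))
                                    \<le> err_exp Pi0 s2 (exp (- A * \<Delta>s))))"
    by (intro exI[of _ am] conjI allI impI exp_spacing_argmax)
next
  fix \<epsilon> :: real assume "\<epsilon> > 0"
  have "sqrt 2 - 1 > 0" by simp
  show "\<exists>\<delta>>0. \<forall>Pi0 am. 0 < Pi0 \<and> Pi0 / s2 < \<delta> \<and> Pi0 / s2 < 1
            \<and> am \<in> {0..1} \<and> (\<forall>a\<in>{0..1}. err_exp Pi0 s2 a \<le> err_exp Pi0 s2 am)
            \<longrightarrow> am > 1 - \<epsilon>"
  proof (intro exI[of _ "\<epsilon> * (sqrt 2 - 1)"] conjI allI impI)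
    show "\<epsilon> * (sqrt 2 - 1) > 0" using \<open>\<epsilon> > 0\<close> \<open>sqrt 2 - 1 > 0\<close> by simp
    fix Pi0 am :: real
    assume "0 < Pi0 \<and> Pi0 / s2 < \<epsilon> * (sqrt 2 - 1) \<and> Pi0 / s2 < 1
      \<and> am \<in> {0..1} \<and> (\<forall>a\<in>{0..1}. err_exp Pi0 s2 a \<le> err_exp Pi0 s2 am)"
    then have "1 - am \<le> (Pi0 / s2) / (sqrt 2 - 1)" and "(Pi0 / s2) / (sqrt 2 - 1) < \<epsilon>"
      using err_exp_argmax_gap[OF s2_pos] pos_divide_less_eq[OF \<open>sqrt 2 - 1 > 0\<close>] by blast+
    then show "am > 1 - \<epsilon>" by linarith
  qed
qed

end
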